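(* Let $T:\mathbf{Set}\to\mathbf{Set}$ be a functor and $\Lambda$ a strongly expressive set of monotone singleton-preserving predicate liftings for $T$. Let $(X,\xi)$ be a $T$-coalgebra and let $\lambda_1,\dots,\lambda_k$ be $k$-ary monotone singleton-preserving predicate liftings for $T$, each obtained from a member of $\Lambda$ by reordering, duplicating and/or adding dummy arguments. Let $(A_1,\dots,A_k)$ be the greatest fixed point (w.r.t. componentwise inclusion) of the monotone map $h:(\mathcal{P}X)^k\to(\mathcal{P}X)^k$, $$h(X_1,\dots,X_k)=\big(\xi^{-1}[\lambda_{1,X}(X_1,\dots,X_k)],\dots,\xi^{-1}[\lambda_{k,X}(X_1,\dots,X_k)]\big).$$ Then for each $i$, all elements of $A_i$ are behaviourally equivalent to each other, and for all $i,j$ either $A_i\cap A_j=\varnothing$ or $A_i=A_j$.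
   Context: An $n$-ary predicate lifting for $T$ is a family $\lambda_X:(\mathcal{P}X)^n\to\mathcal{P}(TX)$ natural w.r.t. preimages ($\lambda_X(f^{-1}[A_1],\dots,f^{-1}[A_n])=(Tf)^{-1}[\lambda_Y(A_1,\dots,A_n)]$); monotone if monotone in every argument; singleton-preserving if $|\lambda_X(\{x_1\},\dots,\{x_n\})|=1$ always. $\Lambda$ is strongly expressive if for every set $X$ and $t\in TX$ there exist $\lambda/n\in\Lambda$ and $x_i\in X$ with $\{t\}=\lambda_X(\{x_1\},\dots,\{x_n\})$. A $T$-coalgebra is $(X,\xi)$ with $\xi:X\to TX$; coalgebra morphisms $h$ satisfy $Th\circ\xi=\zeta\circ h$; two states are behaviourally equivalent if some pair of coalgebra morphisms into a common coalgebra identifies them. *)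

theory Defs
  imports "HOL-Library.FuncSet"
begin

text \<open>Set functors are modelled on the subsets of a universe type 'u:
  TX X is the set T(X) (a subset of the type 't) and Tmap X Y f is T f,
  for f a function from X to Y (only its values on X matter).\<close>

definition set_functor ::
  "('u set \<Rightarrow> 't set) \<Rightarrow> ('u set \<Rightarrow> 'u set \<Rightarrow> ('u \<Rightarrow> 'u) \<Rightarrow> 't \<Rightarrow> 't) \<Rightarrow> bool" where
  "set_functor TX Tmap \<longleftrightarrow>
     (\<forall>X Y f. f \<in> X \<rightarrow> Y \<longrightarrow> Tmap X Y f \<in> TX X \<rightarrow> TX Y) \<and>
     (\<forall>X Y f g t. f \<in> X \<rightarrow> Y \<longrightarrow> (\<forall>x\<in>X. f x = g x) \<longrightarrow> t \<in> TX X \<longrightarrow>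
        Tmap X Y f t = Tmap X Y g t) \<and>
     (\<forall>X t. t \<in> TX X \<longrightarrow> Tmap X X id t = t) \<and>
     (\<forall>X Y Z f g t. f \<in> X \<rightarrow> Y \<longrightarrow> g \<in> Y \<rightarrow> Z \<longrightarrow> t \<in> TX X \<longrightarrow>
        Tmap X Z (g \<circ> f) t = Tmap Y Z g (Tmap X Y f t))"

definition pred_lifting ::
  "('u set \<Rightarrow> 't set) \<Rightarrow> ('u set \<Rightarrow> 'u set \<Rightarrow> ('u \<Rightarrow> 'u) \<Rightarrow> 't \<Rightarrow> 't) \<Rightarrow> nat
     \<Rightarrow> ('u set \<Rightarrow> 'u set list \<Rightarrow> 't set) \<Rightarrow> bool" where
  "pred_lifting TX Tmap n l \<longleftrightarrow>
     (\<forall>X As. length As = n \<longrightarrow> set As \<subseteq> Pow X \<longrightarrow> l X As \<subseteq> TX X) \<and>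
     (\<forall>X Y f As. f \<in> X \<rightarrow> Y \<longrightarrow> length As = n \<longrightarrow> set As \<subseteq> Pow Y \<longrightarrow>
        l X (map (\<lambda>A. f -` A \<inter> X) As) = {t \<in> TX X. Tmap X Y f t \<in> l Y As})"

definition monotone_lifting :: "nat \<Rightarrow> ('u set \<Rightarrow> 'u set list \<Rightarrow> 't set) \<Rightarrow> bool" where
  "monotone_lifting n l \<longleftrightarrow>
     (\<forall>X As Bs. length As = n \<longrightarrow> length Bs = n \<longrightarrow> set Bs \<subseteq> Pow X \<longrightarrow>
        (\<forall>i<n. As ! i \<subseteq> Bs ! i) \<longrightarrow> l X As \<subseteq> l X Bs)"

definition singleton_preserving :: "nat \<Rightarrow> ('u set \<Rightarrow> 'u set list \<Rightarrow> 't set) \<Rightarrow> bool" where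
  "singleton_preserving n l \<longleftrightarrow>
     (\<forall>X xs. length xs = n \<longrightarrow> set xs \<subseteq> X \<longrightarrow> card (l X (map (\<lambda>x. {x}) xs)) = 1)"

definition strongly_expressive ::
  "('u set \<Rightarrow> 't set) \<Rightarrow> (nat \<times> ('u set \<Rightarrow> 'u set list \<Rightarrow> 't set)) set \<Rightarrow> bool" where
  "strongly_expressive TX Lam \<longleftrightarrow>
     (\<forall>X. \<forall>t\<in>TX X. \<exists>(n, l)\<in>Lam. \<exists>xs. length xs = n \<and> set xs \<subseteq> X \<and>
        {t} = l X (map (\<lambda>x. {x}) xs))"

definition derived_lifting ::
  "(nat \<times> ('u set \<Rightarrow> 'u set list \<Rightarrow> 't set)) set \<Rightarrow> nat \<Rightarrow> ('u set \<Rightarrow> 'u set list \<Rightarrow> 't set) \<Rightarrow> bool" where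
  "derived_lifting Lam k l \<longleftrightarrow>
     (\<exists>(m, \<mu>)\<in>Lam. \<exists>\<sigma>. (\<forall>j<m. \<sigma> j < k) \<and>
        (\<forall>X As. length As = k \<longrightarrow> set As \<subseteq> Pow X \<longrightarrow>
           l X As = \<mu> X (map (\<lambda>j. As ! \<sigma> j) [0..<m])))"

definition coalgebra :: "('u set \<Rightarrow> 't set) \<Rightarrow> 'u set \<Rightarrow> ('u \<Rightarrow> 't) \<Rightarrow> bool" where
  "coalgebra TX X \<xi> \<longleftrightarrow> \<xi> \<in> X \<rightarrow> TX X"

definition coalg_morphism ::
  "('u set \<Rightarrow> 'u set \<Rightarrow> ('u \<Rightarrow> 'u) \<Rightarrow> 't \<Rightarrow> 't) \<Rightarrow> 'u set \<Rightarrow> ('u \<Rightarrow> 't)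
     \<Rightarrow> 'u set \<Rightarrow> ('u \<Rightarrow> 't) \<Rightarrow> ('u \<Rightarrow> 'u) \<Rightarrow> bool" where
  "coalg_morphism Tmap X \<xi> Z \<zeta> h \<longleftrightarrow>
     h \<in> X \<rightarrow> Z \<and> (\<forall>x\<in>X. Tmap X Z h (\<xi> x) = \<zeta> (h x))"

definition beh_equiv ::
  "('u set \<Rightarrow> 't set) \<Rightarrow> ('u set \<Rightarrow> 'u set \<Rightarrow> ('u \<Rightarrow> 'u) \<Rightarrow> 't \<Rightarrow> 't) \<Rightarrow>
     'u set \<Rightarrow> ('u \<Rightarrow> 't) \<Rightarrow> 'u \<Rightarrow> 'u set \<Rightarrow> ('u \<Rightarrow> 't) \<Rightarrow> 'u \<Rightarrow> bool" where
  "beh_equiv TX Tmap X \<xi> x Y \<upsilon> y \<longleftrightarrow>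
     (\<exists>Z \<zeta> f g. coalgebra TX Z \<zeta> \<and> coalg_morphism Tmap X \<xi> Z \<zeta> f \<and>
        coalg_morphism Tmap Y \<upsilon> Z \<zeta> g \<and> f x = g y)"

end

theory Submission
  imports Defs
begin

text \<open>Call two states related when some A_i contains both, and let q pick a representative of
  each class of the generated equivalence. Every A_j then lies in a single fibre q^-1{z_j}, so by
  monotonicity and naturality lambda_i(A) is contained in (Tq)^-1[lambda_i({z_1},...,{z_k})],
  the preimage of a singleton: T q \<circ> xi is constant on the classes, and q is a morphism onto a
  quotient coalgebra. This gives behavioural equivalence inside each A_i. The same computation
  shows that the q-saturations of the A_i form a post-fixed point, so by maximality each A_i is
  a union of classes; two A_i that meet lie in one class and therefore coincide.\<close>

lemma monotone_liftingD:
  assumes "monotone_lifting n l" "length As = n" "length Bs = n" "set Bs \<subseteq> Pow X"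
    "\<forall>i<n. As ! i \<subseteq> Bs ! i"
  shows "l X As \<subseteq> l X Bs"
  using assms unfolding monotone_lifting_def by simp

lemma pred_lifting_natural:
  assumes "pred_lifting TX Tmap n l" "f \<in> X \<rightarrow> Y" "length As = n" "set As \<subseteq> Pow Y"
  shows "l X (map (\<lambda>A. f -` A \<inter> X) As) = {t \<in> TX X. Tmap X Y f t \<in> l Y As}"
  using assms unfolding pred_lifting_def by simp

lemma singleton_preservingD:
  assumes "singleton_preserving n l" "length xs = n" "set xs \<subseteq> X"
  shows "is_singleton (l X (map (\<lambda>x. {x}) xs))"
  using assms unfolding singleton_preserving_def by (simp add: is_singleton_altdef)

lemma set_functor_funcset:
  assumes "set_functor TX Tmap" "f \<in> X \<rightarrow> Y" "t \<in> TX X"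
  shows "Tmap X Y f t \<in> TX Y"
proof -
  have "Tmap X Y f \<in> TX X \<rightarrow> TX Y"
    using assms(1,2) unfolding set_functor_def by simp
  with assms(3) show ?thesis by blast
qed

lemma lifting_Tmap_eq_if_fibres:
  assumes pl: "pred_lifting TX Tmap n l" and ml: "monotone_lifting n l"
    and sp: "singleton_preserving n l" and q: "q \<in> X \<rightarrow> Z"
    and len: "length As = n" "length zs = n" and zs: "set zs \<subseteq> Z"
    and fibres: "\<forall>i<n. As ! i \<subseteq> q -` {zs ! i} \<inter> X"
    and t: "t \<in> l X As" "t' \<in> l X As"
  shows "Tmap X Z q t = Tmap X Z q t'"
proof -
  let ?pts = "map (\<lambda>z. {z}) zs"
  have "l X As \<subseteq> l X (map (\<lambda>A. q -` A \<inter> X) ?pts)"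
    by (rule monotone_liftingD[OF ml]) (use len fibres in auto)
  also have "\<dots> = {t \<in> TX X. Tmap X Z q t \<in> l Z ?pts}"
    by (rule pred_lifting_natural[OF pl q]) (use len zs in auto)
  finally have "Tmap X Z q t \<in> l Z ?pts" "Tmap X Z q t' \<in> l Z ?pts"
    using t by blast+
  with singleton_preservingD[OF sp len(2) zs] show ?thesis
    by (metis is_singletonE singletonD)
qed

lemma lifting_saturation_postfixed:
  assumes pl: "pred_lifting TX Tmap n l" and ml: "monotone_lifting n l"
    and \<xi>: "\<xi> \<in> X \<rightarrow> TX X"
    and q_fibres: "\<forall>x\<in>X. \<forall>y\<in>X. q x = q y \<longrightarrow> Tmap X (q ` X) q (\<xi> x) = Tmap X (q ` X) q (\<xi> y)"
    and len: "length As = n" and As: "set As \<subseteq> Pow X"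
  shows "q -` q ` {x \<in> X. \<xi> x \<in> l X As} \<inter> X
           \<subseteq> {x \<in> X. \<xi> x \<in> l X (map (\<lambda>A. q -` q ` A \<inter> X) As)}"
proof
  let ?E = "Tmap X (q ` X) q"
  fix x assume "x \<in> q -` q ` {x \<in> X. \<xi> x \<in> l X As} \<inter> X"
  then obtain a where x: "x \<in> X" and a: "a \<in> X" "\<xi> a \<in> l X As" and qxa: "q x = q a"
    by auto
  have natural: "l X (map (\<lambda>A. q -` q ` A \<inter> X) As)
                   = {t \<in> TX X. ?E t \<in> l (q ` X) (map ((`) q) As)}"
    using pred_lifting_natural[OF pl, of q X "q ` X" "map ((`) q) As"] len As
    by (auto simp: comp_def)
  have "l X As \<subseteq> l X (map (\<lambda>A. q -` q ` A \<inter> X) As)"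
    by (rule monotone_liftingD[OF ml]) (use len As nth_mem in fastforce)+
  with a natural have "?E (\<xi> a) \<in> l (q ` X) (map ((`) q) As)"
    by blast
  moreover have "?E (\<xi> x) = ?E (\<xi> a)"
    using q_fibres x a qxa by blast
  ultimately show "x \<in> {x \<in> X. \<xi> x \<in> l X (map (\<lambda>A. q -` q ` A \<inter> X) As)}"
    using x \<xi> natural by auto
qed

lemma coalgebra_quotient:
  assumes sf: "set_functor TX Tmap" and \<xi>: "coalgebra TX X \<xi>"
    and q_fibres: "\<forall>x\<in>X. \<forall>y\<in>X. q x = q y \<longrightarrow> Tmap X (q ` X) q (\<xi> x) = Tmap X (q ` X) q (\<xi> y)"
  shows "\<exists>\<zeta>. coalgebra TX (q ` X) \<zeta> \<and> coalg_morphism Tmap X \<xi> (q ` X) \<zeta> q"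
proof -
  define rep where "rep z = (SOME x. x \<in> X \<and> q x = z)" for z
  have rep: "rep (q x) \<in> X" "q (rep (q x)) = q x" if "x \<in> X" for x
    using someI[of "\<lambda>y. y \<in> X \<and> q y = q x" x] that unfolding rep_def by auto
  have q: "q \<in> X \<rightarrow> q ` X" by simp
  define \<zeta> where "\<zeta> z = Tmap X (q ` X) q (\<xi> (rep z))" for z
  have "\<zeta> z \<in> TX (q ` X)" if "z \<in> q ` X" for z
  proof -
    from that obtain x where "x \<in> X" "z = q x" by blast
    then have "\<xi> (rep z) \<in> TX X"
      using rep \<xi> unfolding coalgebra_def by blast
    then show ?thesis
      unfolding \<zeta>_def by (rule set_functor_funcset[OF sf q])
  qed
  moreover have "Tmap X (q ` X) q (\<xi> x) = \<zeta> (q x)" if "x \<in> X" for x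
    using q_fibres rep[OF that] that unfolding \<zeta>_def by metis
  ultimately have "coalgebra TX (q ` X) \<zeta> \<and> coalg_morphism Tmap X \<xi> (q ` X) \<zeta> q"
    unfolding coalgebra_def coalg_morphism_def using q by blast
  then show ?thesis by blast
qed

lemma gfp_upperbound_of_fixpoints:
  fixes F :: "'a::complete_lattice \<Rightarrow> 'a"
  assumes "mono F" "\<And>C. C = F C \<Longrightarrow> C \<le> A" "B \<le> F B"
  shows "B \<le> A"
  using assms gfp_upperbound gfp_unfold order_trans by metis

text \<open>Components beyond k are emptied and arguments are intersected with X, so that the system
  becomes a monotone operator on the complete lattice of all families of sets.\<close>

lemma postfixpoint_below_maximal_solution:
  fixes lams :: "nat \<Rightarrow> 'u set \<Rightarrow> 'u set list \<Rightarrow> 't set"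
  assumes mono: "\<forall>i<k. monotone_lifting k (lams i)"
    and A_max: "\<forall>B. (\<forall>i<k. B i \<subseteq> X) \<longrightarrow> (\<forall>i<k. B i = {x \<in> X. \<xi> x \<in> lams i X (map B [0..<k])})
              \<longrightarrow> (\<forall>i<k. B i \<subseteq> A i)"
    and B: "\<forall>i<k. B i \<subseteq> {x \<in> X. \<xi> x \<in> lams i X (map B [0..<k])}"
  shows "\<forall>i<k. B i \<subseteq> A i"
proof -
  define F where
    "F P i = (if i < k then {x \<in> X. \<xi> x \<in> lams i X (map (\<lambda>j. P j \<inter> X) [0..<k])} else {})"
    for P :: "nat \<Rightarrow> 'u set" and i
  define cut where "cut P i = (if i < k then P i else {})" for P :: "nat \<Rightarrow> 'u set" and i
  have restrict: "map (\<lambda>j. P j \<inter> X) [0..<k] = map P [0..<k]" if "\<forall>i<k. P i \<subseteq> X" for P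
    using that by (auto intro!: map_cong)
  have "mono F"
  proof (rule monoI, rule le_funI)
    fix P Q :: "nat \<Rightarrow> 'u set" and i assume "P \<le> Q"
    then have "lams i X (map (\<lambda>j. P j \<inter> X) [0..<k]) \<subseteq> lams i X (map (\<lambda>j. Q j \<inter> X) [0..<k])"
      if "i < k"
      using mono that by (intro monotone_liftingD) (auto simp: le_fun_def subset_iff)
    then show "F P i \<le> F Q i" unfolding F_def by auto
  qed
  moreover have "C \<le> cut A" if "C = F C" for C
  proof -
    have C: "C i = F C i" for i using that by simp
    then have CX: "\<forall>i<k. C i \<subseteq> X" unfolding F_def by auto
    then have "\<forall>i<k. C i = {x \<in> X. \<xi> x \<in> lams i X (map C [0..<k])}"
      using C unfolding F_def restrict[OF CX] by simp
    with A_max CX have "\<forall>i<k. C i \<subseteq> A i" by blast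
    then show ?thesis using C unfolding le_fun_def cut_def F_def by simp
  qed
  moreover have "cut B \<le> F (cut B)"
  proof -
    have cut_B: "map (\<lambda>j. cut B j \<inter> X) [0..<k] = map B [0..<k]"
      using B by (auto simp: cut_def intro!: map_cong)
    show ?thesis using B unfolding le_fun_def F_def cut_B by (simp add: cut_def)
  qed
  ultimately have "cut B \<le> cut A" by (rule gfp_upperbound_of_fixpoints)
  then show ?thesis unfolding le_fun_def cut_def by (metis (full_types))
qed

definition class_rep :: "('a \<times> 'a) set \<Rightarrow> 'a \<Rightarrow> 'a" where
  "class_rep R x = (SOME y. (x, y) \<in> R\<^sup>*)"

lemma class_rep_eq_iff:
  assumes "sym R"
  shows "class_rep R x = class_rep R y \<longleftrightarrow> (x, y) \<in> R\<^sup>*"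
proof
  have rep: "(z, class_rep R z) \<in> R\<^sup>*" for z
    unfolding class_rep_def by (rule someI) (rule rtrancl_refl)
  have sym: "sym (R\<^sup>*)" using assms by (rule sym_rtrancl)
  show "(x, y) \<in> R\<^sup>*" if "class_rep R x = class_rep R y"
    using rep[of x] rep[of y] that sym by (metis rtrancl_trans symD)
  show "class_rep R x = class_rep R y" if "(x, y) \<in> R\<^sup>*"
  proof -
    have "{z. (x, z) \<in> R\<^sup>*} = {z. (y, z) \<in> R\<^sup>*}"
      using that sym by (blast intro: rtrancl_trans dest: symD)
    then show ?thesis
      unfolding class_rep_def by (metis mem_Collect_eq)
  qed
qed

locale gfp_lifting_system =
  fixes TX :: "'u set \<Rightarrow> 't set"
    and Tmap :: "'u set \<Rightarrow> 'u set \<Rightarrow> ('u \<Rightarrow> 'u) \<Rightarrow> 't \<Rightarrow> 't"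
    and X :: "'u set" and \<xi> :: "'u \<Rightarrow> 't"
    and k :: nat and lams :: "nat \<Rightarrow> 'u set \<Rightarrow> 'u set list \<Rightarrow> 't set"
    and A :: "nat \<Rightarrow> 'u set"
  assumes T_functor: "set_functor TX Tmap"
    and coalg: "coalgebra TX X \<xi>"
    and lams: "\<forall>i<k. pred_lifting TX Tmap k (lams i) \<and> monotone_lifting k (lams i) \<and>
                     singleton_preserving k (lams i)"
    and A_sub: "\<forall>i<k. A i \<subseteq> X"
    and A_fix: "\<forall>i<k. A i = {x \<in> X. \<xi> x \<in> lams i X (map A [0..<k])}"
    and A_max: "\<forall>B. (\<forall>i<k. B i \<subseteq> X) \<longrightarrow> (\<forall>i<k. B i = {x \<in> X. \<xi> x \<in> lams i X (map B [0..<k])})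
              \<longrightarrow> (\<forall>i<k. B i \<subseteq> A i)"
begin

definition co_member :: "('u \<times> 'u) set" where
  "co_member = {(x, y). \<exists>i<k. x \<in> A i \<and> y \<in> A i}"

abbreviation q :: "'u \<Rightarrow> 'u" where
  "q \<equiv> class_rep co_member"

abbreviation E :: "'t \<Rightarrow> 't" where
  "E \<equiv> Tmap X (q ` X) q"

lemma sym_co_member: "sym co_member"
  unfolding co_member_def sym_def by blast

lemma q_eq_iff: "q x = q y \<longleftrightarrow> (x, y) \<in> co_member\<^sup>*"
  using sym_co_member by (rule class_rep_eq_iff)

lemma q_eq_if_in_same_A:
  assumes "i < k" "x \<in> A i" "y \<in> A i"
  shows "q x = q y"
proof -
  have "(x, y) \<in> co_member" using assms unfolding co_member_def by blast
  then show ?thesis by (simp add: q_eq_iff)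
qed

lemma q_image_A:
  assumes "i < k" "a \<in> A i"
  shows "q ` A i = {q a}"
proof -
  have "q b = q a" if "b \<in> A i" for b
    using q_eq_if_in_same_A[OF assms(1) that assms(2)] .
  then show ?thesis using assms(2) by blast
qed

lemma \<xi>_mem_lams:
  assumes "i < k" "x \<in> A i"
  shows "\<xi> x \<in> lams i X (map A [0..<k])"
proof -
  have "x \<in> {x \<in> X. \<xi> x \<in> lams i X (map A [0..<k])}"
    using assms(2) A_fix[rule_format, OF assms(1)] by (simp only:)
  then show ?thesis by simp
qed

lemma lams_pred_lifting: "i < k \<Longrightarrow> pred_lifting TX Tmap k (lams i)"
  and lams_monotone: "i < k \<Longrightarrow> monotone_lifting k (lams i)"
  and lams_singleton_preserving: "i < k \<Longrightarrow> singleton_preserving k (lams i)"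
  using lams by simp_all

lemma E_\<xi>_eq_if_co_member:
  assumes "(x, y) \<in> co_member"
  shows "E (\<xi> x) = E (\<xi> y)"
proof -
  obtain i where i: "i < k" "x \<in> A i" "y \<in> A i"
    using assms unfolding co_member_def by blast
  have x: "x \<in> X" using A_sub i by blast
  define z where "z j = (if A j = {} then q x else q (SOME a. a \<in> A j))" for j
  have fibre: "A j \<subseteq> q -` {z j} \<inter> X" and z: "z j \<in> q ` X" if j: "j < k" for j
  proof -
    have some: "(SOME a. a \<in> A j) \<in> A j" if "A j \<noteq> {}"
      using that by (simp add: some_in_eq)
    show "A j \<subseteq> q -` {z j} \<inter> X"
    proof
      fix b assume b: "b \<in> A j"
      then have "q b = z j"
        using q_eq_if_in_same_A[OF j b some] unfolding z_def by auto
      with b A_sub j show "b \<in> q -` {z j} \<inter> X" by auto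
    qed
    show "z j \<in> q ` X"
      using some A_sub j x unfolding z_def by auto
  qed
  show ?thesis
  proof (rule lifting_Tmap_eq_if_fibres
      [where TX = TX and Tmap = Tmap and l = "lams i" and zs = "map z [0..<k]"])
    show "set (map z [0..<k]) \<subseteq> q ` X" using z by auto
    show "\<forall>j<k. map A [0..<k] ! j \<subseteq> q -` {map z [0..<k] ! j} \<inter> X" using fibre by simp
  qed (use lams_pred_lifting lams_monotone lams_singleton_preserving \<xi>_mem_lams i in auto)
qed

lemma E_\<xi>_eq_if_q_eq:
  assumes "q x = q y"
  shows "E (\<xi> x) = E (\<xi> y)"
  using assms unfolding q_eq_iff
proof (induction rule: rtrancl_induct)
  case (step y z)
  then show ?case using E_\<xi>_eq_if_co_member[OF step(2)] by simp
qed simp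

lemma E_\<xi>_fibres: "\<forall>x\<in>X. \<forall>y\<in>X. q x = q y \<longrightarrow> E (\<xi> x) = E (\<xi> y)"
  using E_\<xi>_eq_if_q_eq by blast

lemma A_saturated:
  assumes "i < k"
  shows "q -` q ` A i \<inter> X = A i"
proof -
  define B where "B j = q -` q ` A j \<inter> X" for j
  have \<xi>: "\<xi> \<in> X \<rightarrow> TX X" using coalg unfolding coalgebra_def .
  have As: "set (map A [0..<k]) \<subseteq> Pow X" using A_sub by auto
  have "B j \<subseteq> {x \<in> X. \<xi> x \<in> lams j X (map B [0..<k])}" if j: "j < k" for j
  proof -
    note A_fix[rule_format, OF j, symmetric]
    moreover note lifting_saturation_postfixed[OF lams_pred_lifting[OF j] lams_monotone[OF j]
        \<xi> E_\<xi>_fibres _ As]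
    ultimately show ?thesis
      unfolding B_def by (simp add: comp_def)
  qed
  then have "\<forall>j<k. B j \<subseteq> A j"
    using postfixpoint_below_maximal_solution[where lams = lams, OF _ A_max] lams_monotone
    by blast
  with A_sub assms show ?thesis
    unfolding B_def by blast
qed

lemma A_disjoint_or_eq:
  assumes "i < k" "j < k"
  shows "A i \<inter> A j = {} \<or> A i = A j"
proof -
  have "A i = A j" if "a \<in> A i" "a \<in> A j" for a
  proof -
    have "q ` A i = q ` A j"
      using q_image_A[OF assms(1) that(1)] q_image_A[OF assms(2) that(2)] by simp
    then show ?thesis
      using A_saturated[OF assms(1)] A_saturated[OF assms(2)] by (metis (no_types))
  qed
  then show ?thesis by blast
qed

lemma A_beh_equiv:
  assumes "i < k" "x \<in> A i" "y \<in> A i"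
  shows "beh_equiv TX Tmap X \<xi> x X \<xi> y"
proof -
  obtain \<zeta> where "coalgebra TX (q ` X) \<zeta>" "coalg_morphism Tmap X \<xi> (q ` X) \<zeta> q"
    using coalgebra_quotient[OF T_functor coalg E_\<xi>_fibres] by blast
  moreover have "q x = q y" using q_eq_if_in_same_A[OF assms] .
  ultimately show ?thesis
    unfolding beh_equiv_def by (intro exI[of _ "q ` X"] exI[of _ \<zeta>] exI[of _ q]) simp
qed

end

theorem mainTheorem7:
  fixes TX :: "'u set \<Rightarrow> 't set"
    and Tmap :: "'u set \<Rightarrow> 'u set \<Rightarrow> ('u \<Rightarrow> 'u) \<Rightarrow> 't \<Rightarrow> 't"
    and Lam :: "(nat \<times> ('u set \<Rightarrow> 'u set list \<Rightarrow> 't set)) set"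
    and X :: "'u set" and \<xi> :: "'u \<Rightarrow> 't"
    and k :: nat and lams :: "nat \<Rightarrow> 'u set \<Rightarrow> 'u set list \<Rightarrow> 't set"
    and A :: "nat \<Rightarrow> 'u set"
  assumes "set_functor TX Tmap"
    and "\<forall>(n, l)\<in>Lam. pred_lifting TX Tmap n l \<and> monotone_lifting n l \<and> singleton_preserving n l"
    and "strongly_expressive TX Lam"
    and "coalgebra TX X \<xi>"
    and "\<forall>i<k. pred_lifting TX Tmap k (lams i) \<and> monotone_lifting k (lams i) \<and>
               singleton_preserving k (lams i) \<and> derived_lifting Lam k (lams i)"
    and "\<forall>i<k. A i \<subseteq> X"
    and "\<forall>i<k. A i = {x \<in> X. \<xi> x \<in> lams i X (map A [0..<k])}"
    and "\<forall>B. (\<forall>i<k. B i \<subseteq> X) \<longrightarrow> (\<forall>i<k. B i = {x \<in> X. \<xi> x \<in> lams i X (map B [0..<k])})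
              \<longrightarrow> (\<forall>i<k. B i \<subseteq> A i)"
  shows "(\<forall>i<k. \<forall>x\<in>A i. \<forall>y\<in>A i. beh_equiv TX Tmap X \<xi> x X \<xi> y) \<and>
         (\<forall>i<k. \<forall>j<k. A i \<inter> A j = {} \<or> A i = A j)"
proof -
  interpret gfp_lifting_system TX Tmap X \<xi> k lams A
    using assms by unfold_locales blast+
  show ?thesis
    using A_beh_equiv A_disjoint_or_eq by blast
qed

end
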